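(* Let $G$ be a finite soluble group and $N$ a minimal normal subgroup of $G$. If $t\in G$ is an involution, then $\mathrm d(t,N)\le 1$ in $\Gamma(G)$. Moreover, if $x\in G\setminus\{1\}$ satisfies $\mathrm d(x,N)>3$ and $y\in\langle x\rangle$ has prime order, then both $C_G(y)$ and $x$ have odd order.
   Context: For a group $G$, the normalising graph $\Gamma(G)$ has vertex set $G\setminus\{1\}$, and two distinct vertices $x,y$ are adjacent if and only if $\langle x\rangle$ normalises $\langle y\rangle$ or $\langle y\rangle$ normalises $\langle x\rangle$. $\mathrm d$ is graph distance (infinite if there is no path), and $\mathrm d(x,N)=\min\{\mathrm d(x,n):n\in N\setminus\{1\}\}$, which is $0$ if $x\in N$. *)

theory Defs
  imports "HOL-Algebra.Algebra" "HOL-Library.Extended_Nat"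
begin

definition cyc :: "('a, 'b) monoid_scheme \<Rightarrow> 'a \<Rightarrow> 'a set" where
  "cyc G x = generate G {x}"

definition ng_adj :: "('a, 'b) monoid_scheme \<Rightarrow> 'a \<Rightarrow> 'a \<Rightarrow> bool" where
  "ng_adj G x y \<longleftrightarrow>
     x \<in> carrier G - {\<one>\<^bsub>G\<^esub>} \<and> y \<in> carrier G - {\<one>\<^bsub>G\<^esub>} \<and> x \<noteq> y \<and>
     (cyc G x \<subseteq> normalizer G (cyc G y) \<or> cyc G y \<subseteq> normalizer G (cyc G x))"

definition ng_walk :: "('a, 'b) monoid_scheme \<Rightarrow> nat \<Rightarrow> 'a \<Rightarrow> 'a \<Rightarrow> bool" where
  "ng_walk G n x y \<longleftrightarrow>
     (\<exists>p :: nat \<Rightarrow> 'a. p 0 = x \<and> p n = y \<and> (\<forall>i\<le>n. p i \<in> carrier G - {\<one>\<^bsub>G\<^esub>}) \<and>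
        (\<forall>i<n. ng_adj G (p i) (p (Suc i))))"

text \<open>Graph distance (infinite if there is no path).\<close>
definition ng_dist :: "('a, 'b) monoid_scheme \<Rightarrow> 'a \<Rightarrow> 'a \<Rightarrow> enat" where
  "ng_dist G x y = (INF n \<in> {n. ng_walk G n x y}. enat n)"

definition ng_dist_set :: "('a, 'b) monoid_scheme \<Rightarrow> 'a \<Rightarrow> 'a set \<Rightarrow> enat" where
  "ng_dist_set G x N = (INF n \<in> N - {\<one>\<^bsub>G\<^esub>}. ng_dist G x n)"

definition minimal_normal :: "'a set \<Rightarrow> ('a, 'b) monoid_scheme \<Rightarrow> bool" where
  "minimal_normal N G \<longleftrightarrow> N \<lhd> G \<and> N \<noteq> {\<one>\<^bsub>G\<^esub>} \<and>
     (\<forall>M. M \<lhd> G \<and> M \<subseteq> N \<longrightarrow> M = {\<one>\<^bsub>G\<^esub>} \<or> M = N)"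

definition centralizer :: "('a, 'b) monoid_scheme \<Rightarrow> 'a \<Rightarrow> 'a set" where
  "centralizer G y = {g \<in> carrier G. g \<otimes>\<^bsub>G\<^esub> y = y \<otimes>\<^bsub>G\<^esub> g}"

end

theory Submission imports Defs begin

text \<open>An involution t centralises or inverts a non-trivial element of the minimal normal
  subgroup N: N is abelian because G is soluble, so for 1 \<noteq> n \<in> N the element n n^t is
  centralised by t, and t inverts n if it is trivial. Hence d(t, N) \<le> 1.
  A non-trivial power y of x commutes with x, so an involution t in C_G(y) yields a path
  x - y - t - N of length at most 3, and an involution in \<langle>x\<rangle> a shorter one.\<close>

lemma ng_walk_refl: "x \<in> carrier G - {\<one>\<^bsub>G\<^esub>} \<Longrightarrow> ng_walk G 0 x x"
  unfolding ng_walk_def by (rule exI[of _ "\<lambda>_. x"]) auto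

lemma ng_walk_of_adj: "ng_adj G x y \<Longrightarrow> ng_walk G 1 x y"
  unfolding ng_walk_def
  by (rule exI[of _ "\<lambda>i. if i = 0 then x else y"]) (auto simp: ng_adj_def le_Suc_eq)

lemma ng_walk_append:
  assumes "ng_walk G a x y" "ng_walk G b y z"
  shows "ng_walk G (a + b) x z"
proof -
  obtain p where p: "p 0 = x" "p a = y" "\<forall>i\<le>a. p i \<in> carrier G - {\<one>\<^bsub>G\<^esub>}"
    "\<forall>i<a. ng_adj G (p i) (p (Suc i))" using assms(1) unfolding ng_walk_def by blast
  obtain q where q: "q 0 = y" "q b = z" "\<forall>i\<le>b. q i \<in> carrier G - {\<one>\<^bsub>G\<^esub>}"
    "\<forall>i<b. ng_adj G (q i) (q (Suc i))" using assms(2) unfolding ng_walk_def by blast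
  define r where "r i = (if i \<le> a then p i else q (i - a))" for i
  have "r 0 = x" "r (a + b) = z" using p q by (auto simp: r_def)
  moreover have "\<forall>i\<le>a+b. r i \<in> carrier G - {\<one>\<^bsub>G\<^esub>}"
    using p(3) q(3) by (auto simp: r_def)
  moreover have "ng_adj G (r i) (r (Suc i))" if "i < a + b" for i
  proof (cases "i < a")
    case True
    then show ?thesis using p(4) by (auto simp: r_def)
  next
    case False
    then have "Suc i - a = Suc (i - a)" by simp
    then show ?thesis using False q(4) that p(2) q(1) by (auto simp: r_def)
  qed
  ultimately show ?thesis unfolding ng_walk_def by blast
qed

lemma ng_dist_set_le_walk:
  assumes "ng_walk G k x n" "n \<in> N" "n \<noteq> \<one>\<^bsub>G\<^esub>"
  shows "ng_dist_set G x N \<le> enat k"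
proof -
  have "ng_dist G x n \<le> enat k"
    unfolding ng_dist_def using assms(1) by (intro INF_lower2[of k]) auto
  then show ?thesis
    unfolding ng_dist_set_def using assms(2,3) by (intro INF_lower2[of n]) auto
qed

lemma (in group) cyc_subgroup: "x \<in> carrier G \<Longrightarrow> subgroup (cyc G x) G"
  unfolding cyc_def by (simp add: generate_is_subgroup)

lemma (in group) cyc_inv:
  assumes y: "y \<in> carrier G"
  shows "cyc G (inv y) = cyc G y"
proof -
  have "cyc G (inv z) \<subseteq> cyc G z" if z: "z \<in> carrier G" for z
  proof -
    have "inv z \<in> cyc G z"
      unfolding cyc_def using z by (simp add: generate.incl generate_m_inv_closed)
    then show ?thesis
      using generate_subgroup_incl[OF _ cyc_subgroup[OF z]] unfolding cyc_def by blast
  qed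
  from this[of y] this[of "inv y"] show ?thesis using y by auto
qed

lemma (in group) conj_hom:
  assumes x: "x \<in> carrier G"
  shows "group_hom G G (\<lambda>h. x \<otimes> h \<otimes> inv x)"
proof -
  have "x \<otimes> (a \<otimes> b) \<otimes> inv x = x \<otimes> a \<otimes> inv x \<otimes> (x \<otimes> b \<otimes> inv x)"
    if "a \<in> carrier G" "b \<in> carrier G" for a b
    using that x by (simp add: m_assoc inv_solve_left)
  then show ?thesis
    unfolding group_hom_def group_hom_axioms_def using x by (auto intro!: homI simp: is_group)
qed

lemma (in group) conj_coset_eq_image:
  "H \<subseteq> carrier G \<Longrightarrow> x <# H #> inv x = (\<lambda>h. x \<otimes> h \<otimes> inv x) ` H"
  unfolding l_coset_def r_coset_def by auto

lemma (in group) cyc_subset_normalizer: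
  assumes x: "x \<in> carrier G" and y: "y \<in> carrier G"
    and xy: "x \<otimes> y \<otimes> inv x \<in> {y, inv y}"
  shows "cyc G x \<subseteq> normalizer G (cyc G y)"
proof -
  interpret conj: group_hom G G "\<lambda>h. x \<otimes> h \<otimes> inv x" using conj_hom[OF x] .
  have sub: "cyc G y \<subseteq> carrier G" using subgroup.subset[OF cyc_subgroup[OF y]] .
  have "x <# cyc G y #> inv x = (\<lambda>h. x \<otimes> h \<otimes> inv x) ` generate G {y}"
    using conj_coset_eq_image[OF sub] unfolding cyc_def .
  also have "\<dots> = cyc G (x \<otimes> y \<otimes> inv x)"
    using conj.generate_img[of "{y}"] y unfolding cyc_def by simp
  also have "\<dots> = cyc G y"
    using xy cyc_inv[OF y] by (elim insertE) simp_all
  finally have "x \<in> normalizer G (cyc G y)"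
    unfolding normalizer_def stabilizer_def using x sub by simp
  then show ?thesis
    using generate_subgroup_incl[OF _ normalizer_imp_subgroup[OF sub], of "{x}"]
    unfolding cyc_def by simp
qed

lemma (in group) ng_adjI:
  assumes "x \<in> carrier G" "y \<in> carrier G" "x \<noteq> \<one>" "y \<noteq> \<one>" "x \<noteq> y"
    "x \<otimes> y \<otimes> inv x \<in> {y, inv y}"
  shows "ng_adj G x y"
  using cyc_subset_normalizer[OF assms(1,2,6)] assms unfolding ng_adj_def by auto

lemma (in group) commuting_walk:
  assumes "x \<in> carrier G" "z \<in> carrier G" "x \<noteq> \<one>" "z \<noteq> \<one>" "x \<otimes> z = z \<otimes> x"
  shows "\<exists>k\<le>1. ng_walk G k x z"
proof (cases "x = z")
  case True
  then show ?thesis using ng_walk_refl[of x G] assms(1,3) by (intro exI[of _ 0]) simp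
next
  case False
  have "x \<otimes> z \<otimes> inv x = z" using assms by (simp add: m_assoc)
  then have "ng_walk G 1 x z" using ng_adjI[OF assms(1-4) False] ng_walk_of_adj by simp
  then show ?thesis by (intro exI[of _ 1]) simp
qed

lemma (in group) ord_eq_2_iff:
  assumes "t \<in> carrier G"
  shows "ord t = 2 \<longleftrightarrow> t \<noteq> \<one> \<and> t \<otimes> t = \<one>"
proof -
  have "t \<otimes> t = t [^] (2::nat)" using assms by (simp add: numeral_2_eq_2)
  then have "t \<otimes> t = \<one> \<longleftrightarrow> ord t dvd 2" using pow_eq_id assms by simp
  moreover have "ord t dvd 2 \<longleftrightarrow> ord t = 1 \<or> ord t = 2"
    using dvd_imp_le[of "ord t" 2] by (auto simp: le_Suc_eq numeral_2_eq_2)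
  ultimately show ?thesis using ord_eq_1[OF assms] by auto
qed

lemma (in group) even_order_subgroup_involution:
  assumes H: "subgroup H G" and fin: "finite H" and ev: "even (card H)"
  shows "\<exists>t\<in>H. ord t = 2"
proof -
  let ?H = "G\<lparr>carrier := H\<rparr>"
  have "order ?H = 2 ^ 1 * (card H div 2)" using ev by (simp add: order_def)
  then obtain K where K: "subgroup K ?H" "card K = 2"
    using sylow_thm[of 2 ?H 1 "card H div 2"] subgroup_imp_group[OF H] fin by auto
  then obtain t where t: "K = {\<one>, t}" "t \<noteq> \<one>"
    using subgroup.one_closed[OF K(1)] card_2_iff[of K] by auto
  have tH: "t \<in> H" using subgroup.subset[OF K(1)] t by auto
  then have tc: "t \<in> carrier G" using subgroup.mem_carrier[OF H] by blast
  have "t \<otimes> t \<in> {\<one>, t}" using subgroup.m_closed[OF K(1), of t t] t by simp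
  moreover have "t \<otimes> t \<noteq> t" using t(2) tc by simp
  ultimately have "t \<otimes> t = \<one>" by blast
  then show ?thesis using ord_eq_2_iff[OF tc] t(2) tH by blast
qed

lemma (in group) even_ord_involution:
  assumes x: "x \<in> carrier G" and pos: "ord x \<noteq> 0" and ev: "even (ord x)"
  shows "ord (x [^] (ord x div 2)) = 2"
proof -
  obtain h where h: "ord x = 2 * h" "h \<noteq> 0" using pos ev by (auto elim!: evenE)
  then show ?thesis using ord_pow[OF x, of h] by simp
qed

lemma (in group) centralizer_subgroup:
  assumes y: "y \<in> carrier G"
  shows "subgroup (centralizer G y) G"
proof (rule subgroupI)
  show "centralizer G y \<subseteq> carrier G" unfolding centralizer_def by auto
  show "centralizer G y \<noteq> {}" unfolding centralizer_def using y by auto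
next
  fix g assume "g \<in> centralizer G y"
  then have g: "g \<in> carrier G" "g \<otimes> y = y \<otimes> g" unfolding centralizer_def by auto
  have "inv g \<otimes> y = inv g \<otimes> (y \<otimes> g) \<otimes> inv g" using g(1) y by (simp add: m_assoc)
  also have "\<dots> = inv g \<otimes> (g \<otimes> y) \<otimes> inv g" using g(2) by simp
  also have "\<dots> = y \<otimes> inv g" using g(1) y by (simp add: m_assoc[symmetric])
  finally show "inv g \<in> centralizer G y" unfolding centralizer_def using g by simp
next
  fix g h assume "g \<in> centralizer G y" "h \<in> centralizer G y"
  then have g: "g \<in> carrier G" "g \<otimes> y = y \<otimes> g" and h: "h \<in> carrier G" "h \<otimes> y = y \<otimes> h"
    unfolding centralizer_def by auto
  have "g \<otimes> h \<otimes> y = g \<otimes> (h \<otimes> y)" using g(1) h(1) y by (simp add: m_assoc)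
  also have "\<dots> = g \<otimes> (y \<otimes> h)" using h(2) by simp
  also have "\<dots> = g \<otimes> y \<otimes> h" using g(1) h(1) y by (simp add: m_assoc)
  also have "\<dots> = y \<otimes> g \<otimes> h" using g(2) by simp
  also have "\<dots> = y \<otimes> (g \<otimes> h)" using g(1) h(1) y by (simp add: m_assoc)
  finally show "g \<otimes> h \<in> centralizer G y" unfolding centralizer_def using g h by simp
qed

lemma (in group) cyc_commute:
  assumes x: "x \<in> carrier G" and y: "y \<in> cyc G x"
  shows "y \<in> carrier G" "x \<otimes> y = y \<otimes> x"
proof -
  have "x \<in> centralizer G x" unfolding centralizer_def using x by simp
  then have "cyc G x \<subseteq> centralizer G x"
    using generate_subgroup_incl[OF _ centralizer_subgroup[OF x]] unfolding cyc_def by blast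
  then show "y \<in> carrier G" "x \<otimes> y = y \<otimes> x" using y unfolding centralizer_def by auto
qed

lemma (in group) minimal_normal_subgroup: "minimal_normal N G \<Longrightarrow> subgroup N G"
  unfolding minimal_normal_def by (auto intro: normal_imp_subgroup)

lemma (in group) minimal_normal_solvable_commute:
  assumes sol: "solvable G" and mn: "minimal_normal N G" and a: "a \<in> N" and b: "b \<in> N"
  shows "a \<otimes> b = b \<otimes> a"
proof -
  have nN: "N \<lhd> G" and ne: "N \<noteq> {\<one>}"
    and mi: "\<And>M. M \<lhd> G \<Longrightarrow> M \<subseteq> N \<Longrightarrow> M = {\<one>} \<or> M = N"
    using mn unfolding minimal_normal_def by auto
  have sN: "subgroup N G" using mn by (rule minimal_normal_subgroup)
  have "derived G N \<noteq> N"
  proof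
    assume eq: "derived G N = N"
    then have "(derived G ^^ n) N = N" for n by (induct n) simp_all
    moreover obtain n where "(derived G ^^ n) N = {\<one>}"
      using solvable_imp_trivial_derived_seq[OF solvable_subgroup[OF sN sol]] by blast
    ultimately show False using ne by simp
  qed
  then have trivial: "derived G N = {\<one>}"
    using mi[OF derived_is_normal[OF nN] derived_incl[OF subset_refl sN]] by blast
  have ac: "a \<in> carrier G" "b \<in> carrier G" using a b subgroup.mem_carrier[OF sN] by auto
  have "a \<otimes> b \<otimes> inv a \<otimes> inv b \<in> derived G N"
    unfolding derived_def using a b by (intro generate.incl) blast
  then have "a \<otimes> b \<otimes> inv a \<otimes> inv b = \<one>" using trivial by simp
  then have "a \<otimes> b \<otimes> inv a \<otimes> inv b \<otimes> b \<otimes> a = b \<otimes> a" using ac by simp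
  then show ?thesis using ac by (simp add: m_assoc)
qed

lemma (in group) involution_centralizes_or_inverts:
  assumes sol: "solvable G" and mn: "minimal_normal N G"
    and t: "t \<in> carrier G" and ord_t: "ord t = 2"
  shows "\<exists>n \<in> N - {\<one>}. t \<otimes> n \<otimes> inv t \<in> {n, inv n}"
proof -
  have nN: "N \<lhd> G" and "N \<noteq> {\<one>}" using mn unfolding minimal_normal_def by auto
  have sN: "subgroup N G" using mn by (rule minimal_normal_subgroup)
  then obtain n where n: "n \<in> N" "n \<noteq> \<one>"
    using \<open>N \<noteq> {\<one>}\<close> subgroup.one_closed by blast
  define c where "c = t \<otimes> n \<otimes> inv t"
  have nc: "n \<in> carrier G" using n subgroup.mem_carrier[OF sN] by blast
  have cN: "c \<in> N" unfolding c_def using normal.inv_op_closed2[OF nN t n(1)] .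
  have cc: "c \<in> carrier G" using cN subgroup.mem_carrier[OF sN] by blast
  interpret conj: group_hom G G "\<lambda>h. t \<otimes> h \<otimes> inv t" using conj_hom[OF t] .
  have "t \<otimes> t = \<one>" using ord_eq_2_iff[OF t] ord_t by blast
  then have "inv t = t" using inv_equality t by blast
  then have "t \<otimes> c \<otimes> inv t = inv t \<otimes> c \<otimes> t" by simp
  also have "\<dots> = n" unfolding c_def using t nc by (simp add: m_assoc) (simp add: m_assoc [symmetric])
  finally have tct: "t \<otimes> c \<otimes> inv t = n" .
  show ?thesis
  proof (cases "n \<otimes> c = \<one>")
    case True
    then have "c \<otimes> n = \<one>" using minimal_normal_solvable_commute[OF sol mn n(1) cN] by simp
    then have "c = inv n" using inv_equality[OF _ nc cc] by simp
    then show ?thesis using n unfolding c_def by blast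
  next
    case False
    have "t \<otimes> (n \<otimes> c) \<otimes> inv t = c \<otimes> n" using tct nc cc by (simp add: c_def[symmetric])
    also have "\<dots> = n \<otimes> c" using minimal_normal_solvable_commute[OF sol mn cN n(1)] .
    finally show ?thesis using False subgroup.m_closed[OF sN n(1) cN] by blast
  qed
qed

lemma (in group) involution_walk_to_minimal_normal:
  assumes "solvable G" "minimal_normal N G" and t: "t \<in> carrier G" "ord t = 2"
  shows "\<exists>n \<in> N - {\<one>}. \<exists>k\<le>1. ng_walk G k t n"
proof -
  from involution_centralizes_or_inverts[OF assms]
  obtain n where n: "n \<in> N - {\<one>}" and tn: "t \<otimes> n \<otimes> inv t \<in> {n, inv n}" ..
  have "t \<noteq> \<one>" using ord_eq_2_iff[OF t(1)] t(2) by blast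
  have "subgroup N G" using assms(2) by (rule minimal_normal_subgroup)
  then have nc: "n \<in> carrier G" using subgroup.mem_carrier n by auto
  show ?thesis
  proof (cases "t = n")
    case True
    then have "ng_walk G 0 t n" using ng_walk_refl[of t G] t(1) \<open>t \<noteq> \<one>\<close> by simp
    then show ?thesis using n by (intro bexI[of _ n] exI[of _ 0]) auto
  next
    case False
    have "ng_adj G t n" using ng_adjI[OF t(1) nc \<open>t \<noteq> \<one>\<close> _ False tn] n by simp
    then show ?thesis using n ng_walk_of_adj by (intro bexI[of _ n] exI[of _ 1]) auto
  qed
qed

lemma (in group) involution_dist_minimal_normal_le_1:
  assumes "solvable G" "minimal_normal N G" "t \<in> carrier G" "ord t = 2"
  shows "ng_dist_set G t N \<le> 1"
proof -
  from involution_walk_to_minimal_normal[OF assms]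
  obtain n k where n: "n \<in> N - {\<one>}" and "k \<le> 1" and tn: "ng_walk G k t n" by blast
  then have "ng_dist_set G t N \<le> enat k" using ng_dist_set_le_walk[OF tn] by auto
  then show ?thesis using \<open>k \<le> 1\<close> by (simp add: one_enat_def order_trans)
qed

lemma (in group) commuting_involution_dist_minimal_normal_le_3:
  assumes "solvable G" "minimal_normal N G"
    and x: "x \<in> carrier G" "x \<noteq> \<one>" and z: "z \<in> carrier G" "z \<noteq> \<one>"
    and t: "t \<in> carrier G" "ord t = 2"
    and "x \<otimes> z = z \<otimes> x" "z \<otimes> t = t \<otimes> z"
  shows "ng_dist_set G x N \<le> 3"
proof -
  have "t \<noteq> \<one>" using ord_eq_2_iff[OF t(1)] t(2) by blast
  obtain k1 where "k1 \<le> 1" and xz: "ng_walk G k1 x z"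
    using commuting_walk[OF x(1) z(1) x(2) z(2) assms(9)] by blast
  obtain k2 where "k2 \<le> 1" and zt: "ng_walk G k2 z t"
    using commuting_walk[OF z(1) t(1) z(2) \<open>t \<noteq> \<one>\<close> assms(10)] by blast
  from involution_walk_to_minimal_normal[OF assms(1,2) t]
  obtain n k3 where n: "n \<in> N - {\<one>}" and "k3 \<le> 1" and tn: "ng_walk G k3 t n" by blast
  have "ng_dist_set G x N \<le> enat (k1 + k2 + k3)"
    using ng_dist_set_le_walk[OF ng_walk_append[OF ng_walk_append[OF xz zt] tn]] n by auto
  also have "\<dots> \<le> 3" using \<open>k1 \<le> 1\<close> \<open>k2 \<le> 1\<close> \<open>k3 \<le> 1\<close> by (simp add: numeral_eq_enat)
  finally show ?thesis .
qed

lemma (in group) far_from_minimal_normal_odd_centralizer: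
  assumes "solvable G" "minimal_normal N G" "finite (carrier G)"
    and x: "x \<in> carrier G" "x \<noteq> \<one>" and y: "y \<in> carrier G" "y \<noteq> \<one>"
    and xy: "x \<otimes> y = y \<otimes> x" and far: "ng_dist_set G x N > 3"
  shows "odd (card (centralizer G y))"
proof
  assume "even (card (centralizer G y))"
  then obtain t where "t \<in> centralizer G y" "ord t = 2"
    using even_order_subgroup_involution[OF centralizer_subgroup[OF y(1)]] assms(3)
    unfolding centralizer_def by auto
  then have "ng_dist_set G x N \<le> 3"
    using commuting_involution_dist_minimal_normal_le_3[OF assms(1,2) x y _ _ xy]
    unfolding centralizer_def by auto
  then show False using far by simp
qed

lemma (in group) far_from_minimal_normal_odd_ord:
  assumes "solvable G" "minimal_normal N G" "finite (carrier G)"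
    and x: "x \<in> carrier G" "x \<noteq> \<one>" and far: "ng_dist_set G x N > 3"
  shows "odd (ord x)"
proof
  assume "even (ord x)"
  moreover have "ord x \<noteq> 0" using ord_ge_1[OF assms(3) x(1)] by simp
  ultimately have "ord (x [^] (ord x div 2)) = 2" using even_ord_involution x(1) by blast
  moreover have "x \<otimes> x [^] (ord x div 2) = x [^] (ord x div 2) \<otimes> x"
    using x(1) by (metis nat_pow_Suc nat_pow_Suc2)
  ultimately have "ng_dist_set G x N \<le> 3"
    using commuting_involution_dist_minimal_normal_le_3[OF assms(1,2) x x nat_pow_closed[OF x(1)]]
    by simp
  then show False using far by simp
qed

theorem mainTheorem7:
  fixes G (structure) and N :: "'a set"
  assumes "group G" and "finite (carrier G)" and "solvable G"
    and "minimal_normal N G"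
  shows "(\<forall>t \<in> carrier G. group.ord G t = 2 \<longrightarrow> ng_dist_set G t N \<le> 1)
    \<and> (\<forall>x \<in> carrier G - {\<one>}. \<forall>y \<in> cyc G x.
         ng_dist_set G x N > 3 \<and> Factorial_Ring.prime (group.ord G y) \<longrightarrow>
           odd (card (centralizer G y)) \<and> odd (group.ord G x))"
proof -
  interpret group G by fact
  have "odd (card (centralizer G y)) \<and> odd (ord x)"
    if x: "x \<in> carrier G" "x \<noteq> \<one>" and y: "y \<in> cyc G x"
      and far: "ng_dist_set G x N > 3" and "Factorial_Ring.prime (ord y)" for x y
  proof -
    have yc: "y \<in> carrier G" and xy: "x \<otimes> y = y \<otimes> x" using cyc_commute[OF x(1) y] by auto
    have "y \<noteq> \<one>" using \<open>Factorial_Ring.prime (ord y)\<close> by auto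
    then show ?thesis
      using far_from_minimal_normal_odd_centralizer[OF assms(3,4,2) x yc _ xy far]
        far_from_minimal_normal_odd_ord[OF assms(3,4,2) x far] by blast
  qed
  then show ?thesis using involution_dist_minimal_normal_le_1[OF assms(3,4)] by blast
qed

end
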